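(* For $\mu_1,\mu_2\in M_+(\mathbb T)$, the one-dimensional subspace of $\mathcal D(\mu_1,\mu_2)$ spanned by the constant function $1$ is a wandering subspace for the multiplication pair $\mathscr M_z=(\mathscr M_{z_1},\mathscr M_{z_2})$ on $\mathcal D(\mu_1,\mu_2)$.
   Context: $\mathbb D$ is the open unit disc, $\mathbb T$ the unit circle, $\mathcal O(\mathbb D^2)$ the holomorphic functions on $\mathbb D^2$, $M_+(\mathbb T)$ the finite positive Borel measures on $\mathbb T$. Integrals $\int_{\mathbb T}\cdots d\theta$ are over $\theta\in[0,2\pi]$ with respect to $d\theta/2\pi$; $dA$ is normalized area measure on $\mathbb D$; $P_\mu(w)=\int_{\mathbb T}\frac{1-|w|^2}{|w-\zeta|^2}d\mu(\zeta)$. $H^2(\mathbb D^2)$ is the space of $f=\sum a_{m,n}z_1^mz_2^n\in\mathcal O(\mathbb D^2)$ with $\|f\|^2_{H^2}=\sum|a_{m,n}|^2<\infty$. For $f\in\mathcal O(\mathbb D^2)$, $D_{\mu_1,\mu_2}(f)=\sup_{0<r<1}\int_{\mathbb T}\int_{\mathbb D}|\partial_1f(z_1,re^{i\theta})|^2P_{\mu_1}(z_1)dA(z_1)d\theta+\sup_{0<r<1}\int_{\mathbb T}\int_{\mathbb D}|\partial_2f(re^{i\theta},z_2)|^2P_{\mu_2}(z_2)dA(z_2)d\theta$. If $\mu_1=0$ or $\mu_2=0$, $\mathcal D(\mu_1,\mu_2)=\{f\in H^2(\mathbb D^2):D_{\mu_1,\mu_2}(f)<\infty\}$, otherwise $\mathcal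 D(\mu_1,\mu_2)=\{f\in\mathcal O(\mathbb D^2):D_{\mu_1,\mu_2}(f)<\infty\}$; it is a Hilbert space with norm $\|f\|^2=\|f\|^2_{H^2}+D_{\mu_1,\mu_2}(f)$, and $\mathscr M_{z_j}$ is the bounded operator of multiplication by $z_j$ on it. A closed subspace $\mathcal W$ is wandering for a commuting pair $T=(T_1,T_2)$ if $T_1^{\alpha_1}T_2^{\alpha_2}\mathcal W\perp T_1^{\beta_1}T_2^{\beta_2}\mathcal W$ whenever $\alpha,\beta\in\mathbb Z_+^2$ and there is $i\in\{1,2\}$ with $\alpha_i=0$ and $\beta_i\ne0$. *)

theory Defs
  imports "HOL-Analysis.Analysis"
begin

type_synonym fun2 = "complex \<Rightarrow> complex \<Rightarrow> complex"

definition holo_bidisc :: "fun2 \<Rightarrow> bool" where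
  "holo_bidisc f \<longleftrightarrow> (\<forall>z1 z2. cmod z1 < 1 \<longrightarrow> cmod z2 < 1 \<longrightarrow>
     (\<exists>a b. ((\<lambda>p. f (fst p) (snd p)) has_derivative (\<lambda>h. a * fst h + b * snd h)) (at (z1, z2))))"

definition taylor_coeff :: "fun2 \<Rightarrow> nat \<Rightarrow> nat \<Rightarrow> complex" where
  "taylor_coeff f m n =
     (deriv ^^ m) (\<lambda>z. (deriv ^^ n) (\<lambda>w. f z w) 0) 0 / (fact m * fact n)"

definition H2_normsq :: "fun2 \<Rightarrow> ennreal" where
  "H2_normsq f = (\<integral>\<^sup>+ mn. ennreal ((cmod (taylor_coeff f (fst mn) (snd mn)))\<^sup>2) \<partial>count_space UNIV)"

text \<open>Finite positive Borel measures on the unit circle, viewed as measures on the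
  complex plane concentrated on the circle.\<close>
definition circle_measure :: "complex measure \<Rightarrow> bool" where
  "circle_measure \<mu> \<longleftrightarrow> sets \<mu> = sets borel \<and> finite_measure \<mu> \<and> emeasure \<mu> (- sphere 0 1) = 0"

definition poisson :: "complex measure \<Rightarrow> complex \<Rightarrow> ennreal" where
  "poisson \<mu> w = (\<integral>\<^sup>+ \<zeta>. ennreal ((1 - (cmod w)\<^sup>2) / (cmod (w - \<zeta>))\<^sup>2) \<partial>\<mu>)"

definition d1 :: "fun2 \<Rightarrow> fun2" where "d1 f z1 z2 = deriv (\<lambda>z. f z z2) z1"
definition d2 :: "fun2 \<Rightarrow> fun2" where "d2 f z1 z2 = deriv (\<lambda>z. f z1 z) z2"

definition disc_int :: "(complex \<Rightarrow> ennreal) \<Rightarrow> ennreal" where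
  "disc_int g = ennreal (1 / pi) * (\<integral>\<^sup>+ z \<in> ball 0 1. g z \<partial>lborel)"

definition circle_int :: "(real \<Rightarrow> ennreal) \<Rightarrow> ennreal" where
  "circle_int g = ennreal (1 / (2 * pi)) * (\<integral>\<^sup>+ \<theta> \<in> {0..2*pi}. g \<theta> \<partial>lborel)"

definition dirichlet :: "complex measure \<Rightarrow> complex measure \<Rightarrow> fun2 \<Rightarrow> ennreal" where
  "dirichlet \<mu>1 \<mu>2 f =
     (SUP r \<in> {0<..<1::real}. circle_int (\<lambda>\<theta>. disc_int (\<lambda>z1.
         ennreal ((cmod (d1 f z1 (complex_of_real r * cis \<theta>)))\<^sup>2) * poisson \<mu>1 z1)))
   + (SUP r \<in> {0<..<1::real}. circle_int (\<lambda>\<theta>. disc_int (\<lambda>z2.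
         ennreal ((cmod (d2 f (complex_of_real r * cis \<theta>) z2))\<^sup>2) * poisson \<mu>2 z2)))"

definition zero_measure :: "complex measure \<Rightarrow> bool" where
  "zero_measure \<mu> \<longleftrightarrow> emeasure \<mu> (space \<mu>) = 0"

definition Dspace :: "complex measure \<Rightarrow> complex measure \<Rightarrow> fun2 set" where
  "Dspace \<mu>1 \<mu>2 = {f. holo_bidisc f \<and> dirichlet \<mu>1 \<mu>2 f < \<infinity> \<and>
      ((zero_measure \<mu>1 \<or> zero_measure \<mu>2) \<longrightarrow> H2_normsq f < \<infinity>)}"

definition D_normsq :: "complex measure \<Rightarrow> complex measure \<Rightarrow> fun2 \<Rightarrow> real" where
  "D_normsq \<mu>1 \<mu>2 f = enn2real (H2_normsq f + dirichlet \<mu>1 \<mu>2 f)"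

definition D_inner :: "complex measure \<Rightarrow> complex measure \<Rightarrow> fun2 \<Rightarrow> fun2 \<Rightarrow> complex" where
  "D_inner \<mu>1 \<mu>2 f g =
     (\<Sum>k<4::nat. \<i> ^ k * complex_of_real (D_normsq \<mu>1 \<mu>2 (\<lambda>z w. f z w + \<i> ^ k * g z w))) / 4"

definition Mz1 :: "fun2 \<Rightarrow> fun2" where "Mz1 f z1 z2 = z1 * f z1 z2"
definition Mz2 :: "fun2 \<Rightarrow> fun2" where "Mz2 f z1 z2 = z2 * f z1 z2"

definition wandering :: "('a \<Rightarrow> 'a \<Rightarrow> complex) \<Rightarrow> ('a \<Rightarrow> 'a) \<Rightarrow> ('a \<Rightarrow> 'a) \<Rightarrow> 'a set \<Rightarrow> bool" where
  "wandering inn T1 T2 W \<longleftrightarrow>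
     (\<forall>a1 a2 b1 b2 :: nat. ((a1 = 0 \<and> b1 \<noteq> 0) \<or> (a2 = 0 \<and> b2 \<noteq> 0)) \<longrightarrow>
        (\<forall>f\<in>W. \<forall>g\<in>W. inn ((T1 ^^ a1) ((T2 ^^ a2) f)) ((T1 ^^ b1) ((T2 ^^ b2) g)) = 0))"

end

theory Submission
  imports Defs
begin

text \<open>Since \<open>M\<^sub>z\<^sup>\<alpha>\<close> maps the constant \<open>c\<close> to \<open>c z\<^sup>\<alpha>\<close>, polarization reduces the
  orthogonality of \<open>c z\<^sup>\<alpha>\<close> and \<open>d z\<^sup>\<beta>\<close> to \<open>\<parallel>c z\<^sup>\<alpha> - l d z\<^sup>\<beta>\<parallel> = \<parallel>c z\<^sup>\<alpha> + l d z\<^sup>\<beta>\<parallel>\<close>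
  for all \<open>l\<close>. The \<open>H\<^sup>2\<close> parts agree because \<open>\<alpha> \<noteq> \<beta>\<close> leaves no cross term.
  If \<open>\<alpha>\<^sub>1 = 0 \<noteq> \<beta>\<^sub>1\<close>, then \<open>\<partial>\<^sub>1\<close> kills \<open>c z\<^sup>\<alpha>\<close>, so the first Dirichlet summand
  only sees \<open>|l|\<close>; in the second one the sign of \<open>l\<close> is absorbed by a rotation
  \<open>z\<^sub>1 \<mapsto> \<omega> z\<^sub>1\<close> with \<open>\<omega> ^ \<beta>\<^sub>1 = -1\<close>, which leaves the average over the circle
  \<open>|z\<^sub>1| = r\<close> unchanged. The case \<open>\<alpha>\<^sub>2 = 0 \<noteq> \<beta>\<^sub>2\<close> follows by exchanging the variables.\<close>

lemma higher_deriv_poly_0: "(deriv ^^ n) (poly p) 0 = fact n * coeff p (n::nat)"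
  for p :: "complex poly"
proof -
  have "poly p = eval_fps (fps_of_poly p)"
    by (simp add: fun_eq_iff)
  then show ?thesis
    using fps_nth_conv_deriv[of "fps_of_poly p" n] by simp
qed

lemma higher_deriv_monomial_sum_0:
  fixes a :: "'i \<Rightarrow> complex"
  assumes "finite K"
  shows "(deriv ^^ n) (\<lambda>w. \<Sum>k\<in>K. a k * w ^ e k) 0 = fact n * (\<Sum>k\<in>K. if e k = n then a k else 0)"
proof -
  have poly_eq: "(\<lambda>w. \<Sum>k\<in>K. a k * w ^ e k) = poly (\<Sum>k\<in>K. monom (a k) (e k))"
    by (simp add: fun_eq_iff poly_sum poly_monom)
  show ?thesis
    unfolding poly_eq higher_deriv_poly_0 by (simp add: coeff_sum eq_commute)
qed

lemma taylor_coeff_bipoly: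
  assumes "finite S"
  shows "taylor_coeff (\<lambda>z w. \<Sum>(i, j)\<in>S. c i j * z ^ i * w ^ j) m n = (if (m, n) \<in> S then c m n else 0)"
proof -
  have inner: "(deriv ^^ n) (\<lambda>w. \<Sum>(i, j)\<in>S. c i j * z ^ i * w ^ j) 0
      = (\<Sum>k\<in>S. (if snd k = n then fact n * c (fst k) (snd k) else 0) * z ^ fst k)" for z
    using higher_deriv_monomial_sum_0[OF assms, of n "\<lambda>k. c (fst k) (snd k) * z ^ fst k" snd]
    by (simp add: split_beta sum_distrib_left) (auto intro: sum.cong)
  have "(\<Sum>k\<in>S. if fst k = m then if snd k = n then fact n * c (fst k) (snd k) else 0 else 0)
      = (\<Sum>k\<in>S. if (m, n) = k then fact n * c (fst k) (snd k) else 0)"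
    by (rule sum.cong) auto
  then have outer: "(deriv ^^ m) (\<lambda>z. \<Sum>k\<in>S. (if snd k = n then fact n * c (fst k) (snd k) else 0) * z ^ fst k) 0
      = fact m * fact n * (if (m, n) \<in> S then c m n else 0)"
    using higher_deriv_monomial_sum_0[OF assms, of m "\<lambda>k. if snd k = n then fact n * c (fst k) (snd k) else 0" fst]
    by (simp add: sum.delta'[OF assms])
  show ?thesis
    unfolding taylor_coeff_def inner outer by simp
qed

lemma H2_normsq_bipoly:
  assumes "finite S"
  shows "H2_normsq (\<lambda>z w. \<Sum>(i, j)\<in>S. c i j * z ^ i * w ^ j) = (\<Sum>(i, j)\<in>S. ennreal ((cmod (c i j))\<^sup>2))"
  unfolding H2_normsq_def taylor_coeff_bipoly[OF assms]
  by (subst nn_integral_count_space'[OF assms]) (auto simp: split_beta sum_ennreal)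

lemma H2_normsq_binomial:
  assumes "(a1, a2) \<noteq> (b1, b2)"
  shows "H2_normsq (\<lambda>z w. c * z ^ a1 * w ^ a2 + l * (d * z ^ b1 * w ^ b2))
    = ennreal ((cmod c)\<^sup>2) + ennreal ((cmod (l * d))\<^sup>2)"
proof -
  define e where "e i j = (if (i, j) = (a1, a2) then c else l * d)" for i j
  have "(\<lambda>z w. c * z ^ a1 * w ^ a2 + l * (d * z ^ b1 * w ^ b2))
      = (\<lambda>z w. \<Sum>(i, j)\<in>{(a1, a2), (b1, b2)}. e i j * z ^ i * w ^ j)"
    using assms by (auto simp: e_def fun_eq_iff mult_ac)
  then have "H2_normsq (\<lambda>z w. c * z ^ a1 * w ^ a2 + l * (d * z ^ b1 * w ^ b2))
      = (\<Sum>(i, j)\<in>{(a1, a2), (b1, b2)}. ennreal ((cmod (e i j))\<^sup>2))"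
    by (simp only: H2_normsq_bipoly finite.emptyI finite.insertI)
  also have "\<dots> = ennreal ((cmod c)\<^sup>2) + ennreal ((cmod (l * d))\<^sup>2)"
    using assms by (auto simp: e_def)
  finally show ?thesis .
qed

lemma H2_normsq_const: "H2_normsq (\<lambda>z w. c) = ennreal ((cmod c)\<^sup>2)"
  using H2_normsq_bipoly[of "{(0, 0)}" "\<lambda>_ _. c"] by simp

lemma d1_binomial:
  "d1 (\<lambda>z w. c * z ^ a1 * w ^ a2 + l * (d * z ^ b1 * w ^ b2)) z1 z2
    = c * of_nat a1 * z1 ^ (a1 - 1) * z2 ^ a2 + l * (d * of_nat b1 * z1 ^ (b1 - 1) * z2 ^ b2)"
  unfolding d1_def by (rule DERIV_imp_deriv) (auto intro!: derivative_eq_intros simp: algebra_simps)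

lemma d2_binomial:
  "d2 (\<lambda>z w. c * z ^ a1 * w ^ a2 + l * (d * z ^ b1 * w ^ b2)) z1 z2
    = c * z1 ^ a1 * of_nat a2 * z2 ^ (a2 - 1) + l * (d * z1 ^ b1 * of_nat b2 * z2 ^ (b2 - 1))"
  unfolding d2_def by (rule DERIV_imp_deriv) (auto intro!: derivative_eq_intros simp: algebra_simps)

lemma dirichlet_swap: "dirichlet \<mu>1 \<mu>2 f = dirichlet \<mu>2 \<mu>1 (\<lambda>z w. f w z)"
proof -
  have "d1 (\<lambda>z w. f w z) z1 z2 = d2 f z2 z1" "d2 (\<lambda>z w. f w z) z1 z2 = d1 f z2 z1" for z1 z2
    by (simp_all add: d1_def d2_def)
  then show ?thesis
    unfolding dirichlet_def by (simp add: add.commute)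
qed

text \<open>In the polarization sum the terms for \<open>\<i>\<^sup>0, \<i>\<^sup>2\<close> and for \<open>\<i>\<^sup>1, \<i>\<^sup>3\<close> cancel in pairs.\<close>

lemma D_inner_eq_0_if_sign_invariant:
  assumes "\<And>l. D_normsq \<mu>1 \<mu>2 (\<lambda>z w. f z w + - l * g z w) = D_normsq \<mu>1 \<mu>2 (\<lambda>z w. f z w + l * g z w)"
  shows "D_inner \<mu>1 \<mu>2 f g = 0"
  using assms[of 1] assms[of \<i>] by (simp add: D_inner_def eval_nat_numeral)

lemma circle_int_shift:
  fixes G :: "real \<Rightarrow> ennreal"
  assumes G[measurable]: "G \<in> borel_measurable borel" and periodic: "\<And>x. G (x + 2 * pi) = G x"
    and s: "0 \<le> s" "s \<le> 2 * pi"
  shows "circle_int (\<lambda>\<theta>. G (\<theta> + s)) = circle_int G"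
proof -
  have translate: "(\<integral>\<^sup>+x. H x \<partial>lborel) = (\<integral>\<^sup>+x. H (x + t) \<partial>lborel)"
    if [measurable]: "H \<in> borel_measurable borel" for H :: "real \<Rightarrow> ennreal" and t
    using nn_integral_real_affine[OF that, of 1 t] by (simp add: add.commute)
  have "(\<integral>\<^sup>+\<theta>\<in>{0..2*pi}. G (\<theta> + s) \<partial>lborel) = (\<integral>\<^sup>+x. G x * indicator {s..2*pi+s} x \<partial>lborel)"
    by (subst translate[of _ s]) (auto intro!: nn_integral_cong split: split_indicator)
  also have "\<dots> = (\<integral>\<^sup>+x. G x * indicator {s..2*pi} x + G x * indicator {2*pi<..2*pi+s} x \<partial>lborel)"
    using s by (intro nn_integral_cong) (auto split: split_indicator)
  also have "\<dots> = (\<integral>\<^sup>+x. G x * indicator {s..2*pi} x \<partial>lborel) + (\<integral>\<^sup>+x. G x * indicator {2*pi<..2*pi+s} x \<partial>lborel)"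
    by (rule nn_integral_add) auto
  also have "(\<integral>\<^sup>+x. G x * indicator {2*pi<..2*pi+s} x \<partial>lborel) = (\<integral>\<^sup>+x. G x * indicator {0<..s} x \<partial>lborel)"
    by (subst translate[of _ "2*pi"]) (auto simp: periodic intro!: nn_integral_cong split: split_indicator)
  also have "\<dots> = (\<integral>\<^sup>+x. G x * indicator {0..<s} x \<partial>lborel)"
  proof (rule nn_integral_cong_AE)
    show "AE x in lborel. G x * indicator {0<..s} x = G x * indicator {0..<s} x"
      using AE_lborel_singleton[of 0] AE_lborel_singleton[of s]
      by eventually_elim (auto split: split_indicator)
  qed
  also have "(\<integral>\<^sup>+x. G x * indicator {s..2*pi} x \<partial>lborel) + (\<integral>\<^sup>+x. G x * indicator {0..<s} x \<partial>lborel)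
      = (\<integral>\<^sup>+x. G x * indicator {s..2*pi} x + G x * indicator {0..<s} x \<partial>lborel)"
    by (rule nn_integral_add[symmetric]) auto
  also have "\<dots> = (\<integral>\<^sup>+\<theta>\<in>{0..2*pi}. G \<theta> \<partial>lborel)"
    using s by (intro nn_integral_cong) (auto split: split_indicator)
  finally show ?thesis
    by (simp add: circle_int_def)
qed

lemma circle_int_rotate:
  assumes "\<Phi> \<in> borel_measurable borel" and "0 \<le> s" "s \<le> 2 * pi"
  shows "circle_int (\<lambda>\<theta>. \<Phi> (cis s * (r * cis \<theta>))) = circle_int (\<lambda>\<theta>. \<Phi> (r * cis \<theta>))"
proof -
  have rotation: "(\<lambda>\<theta>. \<Phi> (cis s * (r * cis \<theta>))) = (\<lambda>\<theta>. \<Phi> (r * cis (\<theta> + s)))"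
    by (simp add: cis_mult mult.left_commute add.commute)
  have "(\<lambda>\<theta>. \<Phi> (r * cis \<theta>)) \<in> borel_measurable borel"
    using assms(1) by (rule measurable_compose[rotated])
      (intro borel_measurable_continuous_onI continuous_intros)
  moreover have "cis (\<theta> + 2 * pi) = cis \<theta>" for \<theta>
    by (simp add: complex_eq_iff)
  ultimately show ?thesis
    unfolding rotation using circle_int_shift[of "\<lambda>\<theta>. \<Phi> (r * cis \<theta>)" s] assms(2,3) by simp
qed

lemma borel_measurable_poisson:
  assumes "circle_measure \<mu>"
  shows "poisson \<mu> \<in> borel_measurable borel"
proof -
  have sets: "sets \<mu> = sets borel" and "finite_measure \<mu>"
    using assms unfolding circle_measure_def by auto
  then interpret finite_measure \<mu> by simp
  have "(\<lambda>(w::complex, \<zeta>). ennreal ((1 - (cmod w)\<^sup>2) / (cmod (w - \<zeta>))\<^sup>2)) \<in> borel_measurable (borel \<Otimes>\<^sub>M \<mu>)"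
    unfolding measurable_cong_sets[OF sets_pair_measure_cong[OF refl sets] refl] by measurable
  from borel_measurable_nn_integral[OF this] show ?thesis
    unfolding poisson_def[abs_def] by simp
qed

lemma borel_measurable_weighted_disc_int:
  fixes g :: "complex \<Rightarrow> complex \<Rightarrow> complex"
  assumes "circle_measure \<mu>" and g: "(\<lambda>p. g (fst p) (snd p)) \<in> borel_measurable borel"
  shows "(\<lambda>x. disc_int (\<lambda>z. ennreal ((cmod (g x z))\<^sup>2) * poisson \<mu> z)) \<in> borel_measurable borel"
proof -
  have [measurable]: "poisson \<mu> \<in> borel_measurable borel" "ball (0::complex) 1 \<in> sets borel"
    using borel_measurable_poisson[OF assms(1)] by simp_all
  have [measurable]: "(\<lambda>(x, z). g x z) \<in> borel_measurable (borel \<Otimes>\<^sub>M borel)"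
    using g by (simp add: borel_prod split_beta')
  have "(\<lambda>(x::complex, z::complex). ennreal ((cmod (g x z))\<^sup>2) * poisson \<mu> z * indicator (ball 0 1) z)
      \<in> borel_measurable (borel \<Otimes>\<^sub>M lborel)"
    unfolding measurable_cong_sets[OF sets_pair_measure_cong[OF refl sets_lborel] refl]
    by measurable
  from lborel.borel_measurable_nn_integral[OF this] show ?thesis
    unfolding disc_int_def by simp
qed

lemma dirichlet_binomial_minus_first_var:
  assumes "circle_measure \<mu>2" and "a1 = 0" and "b1 \<noteq> 0"
  shows "dirichlet \<mu>1 \<mu>2 (\<lambda>z w. c * z ^ a1 * w ^ a2 + - l * (d * z ^ b1 * w ^ b2))
    = dirichlet \<mu>1 \<mu>2 (\<lambda>z w. c * z ^ a1 * w ^ a2 + l * (d * z ^ b1 * w ^ b2))"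
    (is "dirichlet _ _ (?f (- l)) = dirichlet _ _ (?f l)")
proof -
  define s where "s = pi / real b1"
  have s: "0 \<le> s" "s \<le> 2 * pi"
    using assms(3) by (auto simp: s_def field_simps)
  have "cis s ^ b1 = -1"
    using assms(3) by (simp add: s_def Complex.DeMoivre)
  then have d2_rotate: "d2 (?f (- l)) z1 z2 = d2 (?f l) (cis s * z1) z2" for z1 z2
    unfolding d2_binomial using assms(2) by (simp add: power_mult_distrib)
  have d1_norm: "cmod (d1 (?f (- l)) z1 z2) = cmod (d1 (?f l) z1 z2)" for z1 z2
    unfolding d1_binomial using assms(2) by simp
  have "(\<lambda>p. d2 (?f l) (fst p) (snd p)) \<in> borel_measurable borel"
    unfolding d2_binomial by (intro borel_measurable_continuous_onI continuous_intros)
  from borel_measurable_weighted_disc_int[OF assms(1) this]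
  have second_term: "circle_int (\<lambda>\<theta>. disc_int (\<lambda>z. ennreal ((cmod (d2 (?f (- l)) (complex_of_real r * cis \<theta>) z))\<^sup>2) * poisson \<mu>2 z))
      = circle_int (\<lambda>\<theta>. disc_int (\<lambda>z. ennreal ((cmod (d2 (?f l) (complex_of_real r * cis \<theta>) z))\<^sup>2) * poisson \<mu>2 z))" for r
    unfolding d2_rotate by (rule circle_int_rotate[OF _ s])
  show ?thesis
    unfolding dirichlet_def d1_norm second_term ..
qed

lemma D_normsq_binomial_minus:
  assumes "circle_measure \<mu>1" and "circle_measure \<mu>2"
    and "(a1 = 0 \<and> b1 \<noteq> 0) \<or> (a2 = 0 \<and> b2 \<noteq> 0)"
  shows "D_normsq \<mu>1 \<mu>2 (\<lambda>z w. c * z ^ a1 * w ^ a2 + - l * (d * z ^ b1 * w ^ b2))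
    = D_normsq \<mu>1 \<mu>2 (\<lambda>z w. c * z ^ a1 * w ^ a2 + l * (d * z ^ b1 * w ^ b2))"
    (is "D_normsq _ _ (?f (- l)) = D_normsq _ _ (?f l)")
proof -
  have "(a1, a2) \<noteq> (b1, b2)"
    using assms(3) by auto
  note H2_binomial = H2_normsq_binomial[OF this]
  have H2: "H2_normsq (?f (- l)) = H2_normsq (?f l)"
    unfolding H2_binomial by (simp add: norm_mult)
  have "dirichlet \<mu>1 \<mu>2 (?f (- l)) = dirichlet \<mu>1 \<mu>2 (?f l)"
    using assms(3)
  proof
    assume "a1 = 0 \<and> b1 \<noteq> 0"
    then show ?thesis
      using dirichlet_binomial_minus_first_var[OF assms(2)] by blast
  next
    assume exponents: "a2 = 0 \<and> b2 \<noteq> 0"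
    have swap: "dirichlet \<mu>1 \<mu>2 (?f k)
        = dirichlet \<mu>2 \<mu>1 (\<lambda>z w. c * z ^ a2 * w ^ a1 + k * (d * z ^ b2 * w ^ b1))" for k
      unfolding dirichlet_swap[of \<mu>1 \<mu>2] by (simp add: mult_ac)
    show ?thesis
      unfolding swap by (rule dirichlet_binomial_minus_first_var[OF assms(1)]) (use exponents in auto)
  qed
  with H2 show ?thesis
    by (simp add: D_normsq_def)
qed

lemma Mz1_funpow: "(Mz1 ^^ n) f = (\<lambda>z w. z ^ n * f z w)"
  by (induction n) (simp_all add: Mz1_def mult.assoc)

lemma Mz2_funpow: "(Mz2 ^^ n) f = (\<lambda>z w. w ^ n * f z w)"
  by (induction n) (simp_all add: Mz2_def mult.assoc)

lemma const_in_Dspace: "(\<lambda>z w. c) \<in> Dspace \<mu>1 \<mu>2"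
proof -
  have "holo_bidisc (\<lambda>z w. c)"
    unfolding holo_bidisc_def by (auto intro!: exI[of _ 0])
  moreover have "d1 (\<lambda>z w. c) = (\<lambda>z w. 0)" "d2 (\<lambda>z w. c) = (\<lambda>z w. 0)"
    by (simp_all add: d1_def d2_def fun_eq_iff)
  then have "dirichlet \<mu>1 \<mu>2 (\<lambda>z w. c) = 0"
    by (simp add: dirichlet_def disc_int_def circle_int_def)
  ultimately show ?thesis
    by (simp add: Dspace_def H2_normsq_const)
qed

theorem corollary3p12:
  assumes "circle_measure \<mu>1" and "circle_measure \<mu>2"
  shows "range (\<lambda>c::complex. (\<lambda>z1 z2. c)) \<subseteq> Dspace \<mu>1 \<mu>2
       \<and> wandering (D_inner \<mu>1 \<mu>2) Mz1 Mz2 (range (\<lambda>c::complex. (\<lambda>z1 z2. c)))"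
proof
  show "range (\<lambda>c::complex. (\<lambda>z1 z2. c)) \<subseteq> Dspace \<mu>1 \<mu>2"
    using const_in_Dspace by blast
  show "wandering (D_inner \<mu>1 \<mu>2) Mz1 Mz2 (range (\<lambda>c::complex. (\<lambda>z1 z2. c)))"
    unfolding wandering_def
  proof (intro allI impI ballI)
    fix a1 a2 b1 b2 :: nat and f g :: fun2
    assume exponents: "(a1 = 0 \<and> b1 \<noteq> 0) \<or> (a2 = 0 \<and> b2 \<noteq> 0)"
      and "f \<in> range (\<lambda>c. (\<lambda>z1 z2. c))" "g \<in> range (\<lambda>c. (\<lambda>z1 z2. c))"
    then obtain c d where "f = (\<lambda>z w. c)" "g = (\<lambda>z w. d)"
      by blast
    moreover have "D_inner \<mu>1 \<mu>2 (\<lambda>z w. c * z ^ a1 * w ^ a2) (\<lambda>z w. d * z ^ b1 * w ^ b2) = 0"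
      by (intro D_inner_eq_0_if_sign_invariant D_normsq_binomial_minus assms exponents)
    ultimately show "D_inner \<mu>1 \<mu>2 ((Mz1 ^^ a1) ((Mz2 ^^ a2) f)) ((Mz1 ^^ b1) ((Mz2 ^^ b2) g)) = 0"
      by (simp add: Mz1_funpow Mz2_funpow mult_ac)
  qed
qed

end
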